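(* Let $a,b$ be distinct assertion variables. The implication $$(-*a*b)\wedge(a*a)\ \Rightarrow\ (-*a*a)\vee(-*-*b)$$ holds in the unary interpretation (for every $\eta$ and every $\rho:\mathsf{AVar}\to\mathsf{IRel}_1$), but fails in the binary interpretation: with $\rho(a)=\{([1],[])\}^\uparrow\cup\{([2],[2])\}^\uparrow$ and $\rho(b)=\mathsf{Heap}^2$, the pair $([1,2],[2])$ belongs to the binary meaning of the left side but not to that of the right side.
   Context: $\mathsf{Heap}$: finite partial functions $\mathsf{PosInt}\to\mathsf{Int}$; $[]$ the empty heap; $[m]$ the heap storing $0$ at location $m$ and nothing else, and $[m_1,m_2]=[m_1]\cdot[m_2]$ for distinct $m_1,m_2$; $g\sqsubseteq h$ means $h$ extends $g$; $h\cdot g$ union of disjoint heaps; componentwise on $\mathsf{Heap}^n$; $S^\uparrow$ is the upward closure of a set $S$ of tuples. $\mathsf{IRel}_n$: upward closed subsets of $\mathsf{Heap}^n$; $p*q=\{\mathbf f\cdot\mathbf g\mid\mathbf f\in p,\mathbf g\in q,\text{componentwise disjoint}\}$; $\Delta_n(X)=\{(h_1,\dots,h_n)\mid\exists f\in X.\ \forall k.\ f\sqsubseteq h_k\}$ for $X\subseteq\mathsf{Heap}$. Assertion semantics with $\eta$ and $\rho:\mathsf{AVar}\to\mathsf{IRel}_n$: primitive assertions mean $\Delta_n$ of their standard set of heaps, variables $a$ mean $\rho(a)$, $\wedge,\vee,*$ mean $\cap,\cup,*$, $\exists$ means union over integer values. The assertion $-$ abbreviates $\exists x,y.\,x\hookrightarrow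 y$, whose standard set of heaps is the set of heaps with non-empty domain. Binary: $n=2$; unary: $n=1$. *)

theory Defs
  imports Main
begin

text \<open>A heap is a finite partial function from positive integers (locations)
to integers. We represent it as a map nat to int with finite domain not
containing 0.\<close>

type_synonym heap = "nat \<Rightarrow> int option"

definition Heaps :: "heap set" where
  "Heaps = {h. finite (dom h) \<and> 0 \<notin> dom h}"

text \<open>[m]: the heap storing 0 at location m and nothing else.\<close>
definition single :: "nat \<Rightarrow> heap" where
  "single m = [m \<mapsto> 0]"

text \<open>[m1,m2] = [m1] . [m2]\<close>
definition double :: "nat \<Rightarrow> nat \<Rightarrow> heap" where
  "double m1 m2 = single m1 ++ single m2"

definition tuples :: "nat \<Rightarrow> heap list set" where
  "tuples n = {hs. length hs = n \<and> set hs \<subseteq> Heaps}"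

definition tle :: "heap list \<Rightarrow> heap list \<Rightarrow> bool" where
  "tle fs gs \<longleftrightarrow> length fs = length gs \<and> (\<forall>k < length fs. fs ! k \<subseteq>\<^sub>m gs ! k)"

definition upclose :: "nat \<Rightarrow> heap list set \<Rightarrow> heap list set" where
  "upclose n S = {gs \<in> tuples n. \<exists>fs \<in> S. tle fs gs}"

definition IRel :: "nat \<Rightarrow> heap list set set" where
  "IRel n = {p. p \<subseteq> tuples n \<and> (\<forall>fs \<in> p. \<forall>gs \<in> tuples n. tle fs gs \<longrightarrow> gs \<in> p)}"

definition tdisj :: "heap list \<Rightarrow> heap list \<Rightarrow> bool" where
  "tdisj fs gs \<longleftrightarrow> length fs = length gs \<and>
     (\<forall>k < length fs. dom (fs ! k) \<inter> dom (gs ! k) = {})"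

definition tunion :: "heap list \<Rightarrow> heap list \<Rightarrow> heap list" where
  "tunion fs gs = map2 (++) fs gs"

definition sstar :: "heap list set \<Rightarrow> heap list set \<Rightarrow> heap list set" where
  "sstar p q = {tunion fs gs | fs gs. fs \<in> p \<and> gs \<in> q \<and> tdisj fs gs}"

definition Delta :: "nat \<Rightarrow> heap set \<Rightarrow> heap list set" where
  "Delta n X = {hs \<in> tuples n. \<exists>f \<in> X. \<forall>k < n. f \<subseteq>\<^sub>m hs ! k}"

text \<open>Integer (expression) variables are of type 'x, assertion variables of type 'a.\<close>
datatype ('x, 'a) assn =
    PointsTo 'x 'x
  | AVar 'a
  | Conj "('x, 'a) assn" "('x, 'a) assn"
  | Disj "('x, 'a) assn" "('x, 'a) assn"
  | Star "('x, 'a) assn" "('x, 'a) assn"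
  | Exists 'x "('x, 'a) assn"

definition pto_heaps :: "int \<Rightarrow> int \<Rightarrow> heap set" where
  "pto_heaps l v = {h \<in> Heaps. l > 0 \<and> h (nat l) = Some v}"

fun sem :: "nat \<Rightarrow> ('x \<Rightarrow> int) \<Rightarrow> ('a \<Rightarrow> heap list set) \<Rightarrow> ('x, 'a) assn \<Rightarrow> heap list set" where
  "sem n \<eta> \<rho> (PointsTo x y) = Delta n (pto_heaps (\<eta> x) (\<eta> y))"
| "sem n \<eta> \<rho> (AVar a) = \<rho> a"
| "sem n \<eta> \<rho> (Conj A B) = sem n \<eta> \<rho> A \<inter> sem n \<eta> \<rho> B"
| "sem n \<eta> \<rho> (Disj A B) = sem n \<eta> \<rho> A \<union> sem n \<eta> \<rho> B"
| "sem n \<eta> \<rho> (Star A B) = sstar (sem n \<eta> \<rho> A) (sem n \<eta> \<rho> B)"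
| "sem n \<eta> \<rho> (Exists x A) = (\<Union>v::int. sem n (\<eta>(x := v)) \<rho> A)"

text \<open>The assertion "-" abbreviates EX x y. x \<hookrightarrow> y; we use the integer variables 0 and 1.\<close>
definition Dash :: "(nat, 'a) assn" where
  "Dash = Exists 0 (Exists 1 (PointsTo 0 1))"

definition lhs17 :: "'a \<Rightarrow> 'a \<Rightarrow> (nat, 'a) assn" where
  "lhs17 a b = Conj (Star (Star Dash (AVar a)) (AVar b)) (Star (AVar a) (AVar a))"

definition rhs17 :: "'a \<Rightarrow> 'a \<Rightarrow> (nat, 'a) assn" where
  "rhs17 a b = Disj (Star (Star Dash (AVar a)) (AVar a)) (Star (Star Dash Dash) (AVar b))"

end

theory Submission imports Defs begin

(* Unary half: an upward closed set p of 1-tuples either contains the tuple of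
   the empty heap, and then is all of Heap^1, or contains only tuples with a
   non-empty heap, i.e. is contained in the meaning of "-".  In the first case
   b <= a, in the second a <= "-", so by monotonicity of separating conjunction
   already "- * a * b" entails one of the two disjuncts.
   Binary half: the relation rho(a) is a union of two principal up-sets.  The
   pair ([1,2],[2]) splits as ([2],[2]) * ([1],[]) * ([],[]) and as
   ([1],[]) * ([2],[2]).  It cannot be split against the right side: every
   element of "-" owns a location in the second component, which holds only
   location 2; this forbids two "-" parts, and in "- * a * a" it forces both
   a-parts into the up-set of ([1],[]), whose first components then overlap. *)

lemma tuples_1_cases:
  assumes "hs \<in> tuples 1"
  obtains h where "hs = [h]" and "h \<in> Heaps"
  using assms unfolding tuples_def by (cases hs) auto

lemma tle_1: "tle [u] [x] \<longleftrightarrow> u \<subseteq>\<^sub>m x"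
  by (auto simp: tle_def)

lemma tle_2: "tle [u, v] [x, y] \<longleftrightarrow> u \<subseteq>\<^sub>m x \<and> v \<subseteq>\<^sub>m y"
  unfolding tle_def by (auto simp: less_Suc_eq numeral_2_eq_2)

lemma tdisj_2: "tdisj [u, v] [x, y] \<longleftrightarrow> dom u \<inter> dom x = {} \<and> dom v \<inter> dom y = {}"
  unfolding tdisj_def by (simp add: less_Suc_eq numeral_2_eq_2 all_conj_distrib)

lemma tunion_2: "tunion [u, v] [x, y] = [u ++ x, v ++ y]"
  by (simp add: tunion_def)

lemma pair_in_tuples_2: "[x, y] \<in> tuples 2 \<longleftrightarrow> x \<in> Heaps \<and> y \<in> Heaps"
  by (simp add: tuples_def)

lemma single_Heaps: "m \<noteq> 0 \<Longrightarrow> single m \<in> Heaps"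
  by (simp add: Heaps_def single_def)

lemma empty_Heaps: "Map.empty \<in> Heaps"
  by (simp add: Heaps_def)

lemma dom_single [simp]: "dom (single m) = {m}"
  by (simp add: single_def)

lemma tle_trans: "tle fs gs \<Longrightarrow> tle gs hs \<Longrightarrow> tle fs hs"
  unfolding tle_def using map_le_trans by fastforce

lemma upclose_IRel: "upclose n S \<in> IRel n"
  unfolding IRel_def upclose_def using tle_trans by blast

lemma tuples_IRel: "tuples n \<in> IRel n"
  unfolding IRel_def by blast

lemma IRel_Un: "p \<in> IRel n \<Longrightarrow> q \<in> IRel n \<Longrightarrow> p \<union> q \<in> IRel n"
  unfolding IRel_def by blast

lemma pair_in_upclose_2:
  "[x, y] \<in> upclose 2 {[u, v]} \<longleftrightarrow> x \<in> Heaps \<and> y \<in> Heaps \<and> u \<subseteq>\<^sub>m x \<and> v \<subseteq>\<^sub>m y"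
  by (auto simp: upclose_def tle_2 pair_in_tuples_2)

lemma sstarI: "fs \<in> p \<Longrightarrow> gs \<in> q \<Longrightarrow> tdisj fs gs \<Longrightarrow> tunion fs gs \<in> sstar p q"
  unfolding sstar_def by blast

lemma sstar_mono: "p \<subseteq> p' \<Longrightarrow> q \<subseteq> q' \<Longrightarrow> sstar p q \<subseteq> sstar p' q'"
  unfolding sstar_def by blast

lemma sstar_pairE:
  assumes "[x, y] \<in> sstar p q"
  obtains x1 y1 x2 y2 where "[x1, y1] \<in> p" and "[x2, y2] \<in> q"
    and "x = x1 ++ x2" and "y = y1 ++ y2"
    and "dom x1 \<inter> dom x2 = {}" and "dom y1 \<inter> dom y2 = {}"
proof -
  obtain fs gs where fg: "[x, y] = tunion fs gs" "fs \<in> p" "gs \<in> q" "tdisj fs gs"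
    using assms unfolding sstar_def by blast
  then have "length fs = 2" "length gs = 2"
    by (auto simp: tunion_def tdisj_def dest: arg_cong[of _ _ length])
  then obtain x1 y1 x2 y2 where "fs = [x1, y1]" "gs = [x2, y2]"
    by (auto simp: numeral_2_eq_2 length_Suc_conv)
  with fg that show ?thesis by (simp add: tunion_2 tdisj_2)
qed

lemma sem_Dash:
  "sem n \<eta> \<rho> Dash = {hs \<in> tuples n. \<exists>f \<in> Heaps. dom f \<noteq> {} \<and> (\<forall>k<n. f \<subseteq>\<^sub>m hs ! k)}"
proof (rule set_eqI, rule iffI)
  fix hs assume "hs \<in> sem n \<eta> \<rho> Dash"
  then obtain l v where "hs \<in> Delta n (pto_heaps l v)"
    by (auto simp: Dash_def)
  then obtain f where "hs \<in> tuples n" "f \<in> pto_heaps l v" "\<forall>k<n. f \<subseteq>\<^sub>m hs ! k"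
    unfolding Delta_def by blast
  moreover from \<open>f \<in> pto_heaps l v\<close> have "f \<in> Heaps" "nat l \<in> dom f"
    unfolding pto_heaps_def by auto
  ultimately show "hs \<in> {hs \<in> tuples n. \<exists>f \<in> Heaps. dom f \<noteq> {} \<and> (\<forall>k<n. f \<subseteq>\<^sub>m hs ! k)}"
    by blast
next
  fix hs assume "hs \<in> {hs \<in> tuples n. \<exists>f \<in> Heaps. dom f \<noteq> {} \<and> (\<forall>k<n. f \<subseteq>\<^sub>m hs ! k)}"
  then obtain f l w where hs: "hs \<in> tuples n" and f: "f \<in> Heaps" "\<forall>k<n. f \<subseteq>\<^sub>m hs ! k"
    and lw: "f l = Some w" by blast
  have "l \<noteq> 0" using f(1) lw unfolding Heaps_def by auto
  then have "f \<in> pto_heaps (int l) w" using f(1) lw by (simp add: pto_heaps_def)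
  then have "hs \<in> Delta n (pto_heaps (int l) w)"
    using hs f(2) unfolding Delta_def by blast
  then have "hs \<in> sem n ((\<eta>(0 := int l))(1 := w)) \<rho> (PointsTo 0 1)"
    by simp
  then show "hs \<in> sem n \<eta> \<rho> Dash"
    unfolding Dash_def by auto
qed

lemma Dash_pair_second_nonempty: "[x, y] \<in> sem 2 \<eta> \<rho> Dash \<Longrightarrow> dom y \<noteq> {}"
  unfolding sem_Dash by (force dest: spec[of _ 1] map_le_implies_dom_le)

lemma Dash_pair_diagonal: "h \<in> Heaps \<Longrightarrow> dom h \<noteq> {} \<Longrightarrow> [h, h] \<in> sem 2 \<eta> \<rho> Dash"
  unfolding sem_Dash by (auto simp: tuples_def less_Suc_eq numeral_2_eq_2)

text \<open>Unary dichotomy: an upward closed unary relation is either everything or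
  contained in "-", since containing the empty heap forces everything.\<close>
lemma unary_IRel_dichotomy:
  assumes "p \<in> IRel 1"
  shows "p = tuples 1 \<or> p \<subseteq> sem 1 \<eta> \<rho> Dash"
proof (rule disjCI)
  assume "\<not> p \<subseteq> sem 1 \<eta> \<rho> Dash"
  then obtain fs where fs: "fs \<in> p" "fs \<notin> sem 1 \<eta> \<rho> Dash" by blast
  from fs(1) assms obtain h where h: "fs = [h]" "h \<in> Heaps"
    unfolding IRel_def by (blast elim: tuples_1_cases)
  with fs(2) have "h = Map.empty"
    unfolding sem_Dash by (auto simp: tuples_def)
  have "tle fs gs" if "gs \<in> tuples 1" for gs
    using that by (rule tuples_1_cases) (simp add: h(1) \<open>h = Map.empty\<close> tle_1)
  with fs(1) assms show "p = tuples 1"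
    unfolding IRel_def by blast
qed

text \<open>The unary half: by the dichotomy for rho(a), "- * a * b" already entails the
  right side.\<close>
lemma unary_entailment:
  assumes rel: "\<forall>c. \<rho> c \<in> IRel 1"
  shows "sem 1 \<eta> \<rho> (lhs17 a b) \<subseteq> sem 1 \<eta> \<rho> (rhs17 a b)"
proof -
  let ?D = "sem 1 \<eta> \<rho> Dash"
  have "\<rho> a = tuples 1 \<or> \<rho> a \<subseteq> ?D"
    using rel by (intro unary_IRel_dichotomy) blast
  then have "sstar (sstar ?D (\<rho> a)) (\<rho> b) \<subseteq> sem 1 \<eta> \<rho> (rhs17 a b)"
  proof
    assume "\<rho> a = tuples 1"
    then have "\<rho> b \<subseteq> \<rho> a" using rel unfolding IRel_def by blast
    then show ?thesis by (auto simp: rhs17_def dest: sstar_mono[OF order_refl])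
  next
    assume "\<rho> a \<subseteq> ?D"
    then show ?thesis by (auto simp: rhs17_def dest: sstar_mono[OF sstar_mono[OF order_refl]])
  qed
  then show ?thesis by (auto simp: lhs17_def)
qed

lemma counterexample_a_locations:
  assumes "[x, y] \<in> upclose 2 {[single 1, Map.empty]} \<union> upclose 2 {[single 2, single 2]}"
  shows "1 \<in> dom x \<or> 2 \<in> dom y"
  using assms by (auto simp: pair_in_upclose_2 dest!: map_le_implies_dom_le)

lemma counterexample_lhs:
  assumes ra: "\<rho> a = upclose 2 {[single 1, Map.empty]} \<union> upclose 2 {[single 2, single 2]}"
    and rb: "\<rho> b = tuples 2"
  shows "[double 1 2, single 2] \<in> sem 2 \<eta> \<rho> (lhs17 a b)"
proof -
  have a1: "[single 1, Map.empty] \<in> \<rho> a" and a2: "[single 2, single 2] \<in> \<rho> a"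
    unfolding ra by (auto simp: pair_in_upclose_2 single_Heaps empty_Heaps)
  have b0: "[Map.empty, Map.empty] \<in> \<rho> b"
    unfolding rb by (simp add: pair_in_tuples_2 empty_Heaps)
  have d2: "[single 2, single 2] \<in> sem 2 \<eta> \<rho> Dash"
    by (rule Dash_pair_diagonal) (auto simp: single_Heaps)
  have split_left: "[double 1 2, single 2] = tunion (tunion [single 2, single 2] [single 1, Map.empty]) [Map.empty, Map.empty]"
    using map_add_comm[of "single 1" "single 2"] by (simp add: tunion_2 double_def)
  have split_right: "[double 1 2, single 2] = tunion [single 1, Map.empty] [single 2, single 2]"
    by (simp add: tunion_2 double_def)
  have "[double 1 2, single 2] \<in> sstar (sstar (sem 2 \<eta> \<rho> Dash) (\<rho> a)) (\<rho> b)"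
    unfolding split_left
    by (intro sstarI d2 a1 b0) (auto simp: tdisj_2 tunion_2)
  moreover have "[double 1 2, single 2] \<in> sstar (\<rho> a) (\<rho> a)"
    unfolding split_right by (intro sstarI a1 a2) (simp add: tdisj_2)
  ultimately show ?thesis by (simp add: lhs17_def)
qed

text \<open>Two "-" parts would need two disjoint locations in the second component.\<close>
lemma counterexample_not_Dash_Dash:
  "[double 1 2, single 2] \<notin> sstar (sstar (sem 2 \<eta> \<rho> Dash) (sem 2 \<eta> \<rho> Dash)) q"
proof
  assume "[double 1 2, single 2] \<in> sstar (sstar (sem 2 \<eta> \<rho> Dash) (sem 2 \<eta> \<rho> Dash)) q"
  then obtain x1 y1 x2 y2 where xy1: "[x1, y1] \<in> sstar (sem 2 \<eta> \<rho> Dash) (sem 2 \<eta> \<rho> Dash)"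
    and y: "single 2 = y1 ++ y2"
    by (rule sstar_pairE)
  from xy1 obtain u1 v1 u2 v2 where "[u1, v1] \<in> sem 2 \<eta> \<rho> Dash" "[u2, v2] \<in> sem 2 \<eta> \<rho> Dash"
    and v: "y1 = v1 ++ v2" "dom v1 \<inter> dom v2 = {}"
    by (rule sstar_pairE)
  then have "dom v1 \<noteq> {}" "dom v2 \<noteq> {}" by (auto dest: Dash_pair_second_nonempty)
  moreover have "dom v1 \<subseteq> {2}" "dom v2 \<subseteq> {2}"
    using arg_cong[OF y, of dom] v(1) by auto
  ultimately show False using v(2) by (auto simp: subset_singleton_iff)
qed

text \<open>In "- * a * a" the "-" part takes location 2 on the right, so both
  a-parts must own location 1 on the left, which they cannot share.\<close>
lemma counterexample_not_Dash_a_a: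
  assumes ra: "\<rho> a = upclose 2 {[single 1, Map.empty]} \<union> upclose 2 {[single 2, single 2]}"
  shows "[double 1 2, single 2] \<notin> sstar (sstar (sem 2 \<eta> \<rho> Dash) (\<rho> a)) (\<rho> a)"
proof
  assume "[double 1 2, single 2] \<in> sstar (sstar (sem 2 \<eta> \<rho> Dash) (\<rho> a)) (\<rho> a)"
  then obtain x1 y1 x2 y2 where xy1: "[x1, y1] \<in> sstar (sem 2 \<eta> \<rho> Dash) (\<rho> a)"
    and xy2: "[x2, y2] \<in> \<rho> a" and y: "single 2 = y1 ++ y2"
    and x: "dom x1 \<inter> dom x2 = {}" "dom y1 \<inter> dom y2 = {}"
    by (rule sstar_pairE)
  from xy1 obtain u1 v1 u2 v2 where d: "[u1, v1] \<in> sem 2 \<eta> \<rho> Dash"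
    and a: "[u2, v2] \<in> \<rho> a" and u: "x1 = u1 ++ u2" and v: "y1 = v1 ++ v2" "dom v1 \<inter> dom v2 = {}"
    by (rule sstar_pairE)
  have "dom v1 \<noteq> {}" using d by (rule Dash_pair_second_nonempty)
  moreover have "dom v1 \<subseteq> {2}" using arg_cong[OF y, of dom] v(1) by auto
  ultimately have "2 \<in> dom v1" by auto
  then have "2 \<notin> dom v2" "2 \<notin> dom y2" using v x(2) by auto
  then have "1 \<in> dom u2" "1 \<in> dom x2"
    using counterexample_a_locations a xy2 unfolding ra by blast+
  then show False using u x(1) by auto
qed

theorem mainTheorem17:
  fixes a b :: 'a
  assumes "a \<noteq> b"
  shows "(\<forall>(\<eta> :: nat \<Rightarrow> int) (\<rho> :: 'a \<Rightarrow> heap list set).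
            (\<forall>c. \<rho> c \<in> IRel 1) \<longrightarrow> sem 1 \<eta> \<rho> (lhs17 a b) \<subseteq> sem 1 \<eta> \<rho> (rhs17 a b))
     \<and> (\<forall>(\<eta> :: nat \<Rightarrow> int) (\<rho> :: 'a \<Rightarrow> heap list set).
            \<rho> a = upclose 2 {[single 1, Map.empty]} \<union> upclose 2 {[single 2, single 2]}
            \<longrightarrow> \<rho> b = tuples 2
            \<longrightarrow> \<rho> a \<in> IRel 2 \<and> \<rho> b \<in> IRel 2
              \<and> [double 1 2, single 2] \<in> sem 2 \<eta> \<rho> (lhs17 a b)
              \<and> [double 1 2, single 2] \<notin> sem 2 \<eta> \<rho> (rhs17 a b))"
proof (intro conjI allI impI)
  fix \<eta> :: "nat \<Rightarrow> int" and \<rho> :: "'a \<Rightarrow> heap list set"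
  assume "\<forall>c. \<rho> c \<in> IRel 1"
  then show "sem 1 \<eta> \<rho> (lhs17 a b) \<subseteq> sem 1 \<eta> \<rho> (rhs17 a b)"
    by (rule unary_entailment)
next
  fix \<eta> :: "nat \<Rightarrow> int" and \<rho> :: "'a \<Rightarrow> heap list set"
  assume ra: "\<rho> a = upclose 2 {[single 1, Map.empty]} \<union> upclose 2 {[single 2, single 2]}"
    and rb: "\<rho> b = tuples 2"
  show "\<rho> a \<in> IRel 2" unfolding ra by (intro IRel_Un upclose_IRel)
  show "\<rho> b \<in> IRel 2" unfolding rb by (rule tuples_IRel)
  show "[double 1 2, single 2] \<in> sem 2 \<eta> \<rho> (lhs17 a b)"
    using ra rb by (rule counterexample_lhs)
  show "[double 1 2, single 2] \<notin> sem 2 \<eta> \<rho> (rhs17 a b)"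
    using counterexample_not_Dash_a_a[of \<rho> a, OF ra] counterexample_not_Dash_Dash
    by (simp add: rhs17_def)
qed

end
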